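(* Let $Q\in\mathbb{C}^{2d\times2d}$ be symmetric and $F=\mathcal{J}Q$. Then for every $t>0$, $$S=\Big(\bigcap_{0\le s\le t}\operatorname{Ker}\big({\rm Im}\,e^{2isF}\big)\Big)\cap T^*\mathbb{R}^d=\Big(\bigcap_{k=1}^{\infty}\operatorname{Ker}\big[{\rm Im}\,((iF)^k)\big]\Big)\cap T^*\mathbb{R}^d,$$ and for every $X\in S$ and $t\in\mathbb{R}$ one has $e^{2itF}X=e^{-2t\,{\rm Im}\,F}X$; moreover $e^{2t\,{\rm Im}\,F}S=S$.
   Context: $\mathcal{J}=\begin{pmatrix}0&I_d\\-I_d&0\end{pmatrix}$; ${\rm Re}$, ${\rm Im}$ of matrices are entrywise. Singular space: $S=\Big(\bigcap_{j=0}^{2d-1}\operatorname{Ker}\big[{\rm Re}\,F({\rm Im}\,F)^j\big]\Big)\cap T^*\mathbb{R}^d$, where kernels are in $\mathbb{C}^{2d}$ and $T^*\mathbb{R}^d=\mathbb{R}^{2d}\subseteq\mathbb{C}^{2d}$. *)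

theory Defs
  imports "HOL-Analysis.Analysis"
begin

text \<open>Complex 2d x 2d matrices, indexed by the finite type 'd + 'd
  (first block = position coordinates, second block = momentum coordinates).\<close>

type_synonym 'd cmat = "complex ^ ('d + 'd) ^ ('d + 'd)"
type_synonym 'd cvec = "complex ^ ('d + 'd)"

definition Jmat :: "'d::finite cmat" where
  "Jmat = (\<chi> i j. (case (i, j) of
      (Inl a, Inr b) \<Rightarrow> (if a = b then 1 else 0)
    | (Inr a, Inl b) \<Rightarrow> (if a = b then -1 else 0)
    | _ \<Rightarrow> 0))"

primrec mpow :: "'a::comm_ring_1 ^ 'n ^ 'n \<Rightarrow> nat \<Rightarrow> 'a ^ 'n ^ 'n" where
  "mpow A 0 = mat 1"
| "mpow A (Suc k) = A ** mpow A k"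

definition mscale :: "'a::times \<Rightarrow> 'a ^ 'n ^ 'm \<Rightarrow> 'a ^ 'n ^ 'm" where
  "mscale c A = (\<chi> i j. c * A $ i $ j)"

definition mexp :: "complex ^ 'n ^ 'n \<Rightarrow> complex ^ 'n ^ 'n" where
  "mexp A = (\<Sum>k. mscale (1 / fact k :: complex) (mpow A k))"

definition ReM :: "complex ^ 'n ^ 'm \<Rightarrow> complex ^ 'n ^ 'm" where
  "ReM A = (\<chi> i j. complex_of_real (Re (A $ i $ j)))"
definition ImM :: "complex ^ 'n ^ 'm \<Rightarrow> complex ^ 'n ^ 'm" where
  "ImM A = (\<chi> i j. complex_of_real (Im (A $ i $ j)))"

definition KerM :: "complex ^ 'n ^ 'm \<Rightarrow> (complex ^ 'n) set" where
  "KerM A = {x. A *v x = 0}"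

text \<open>Real phase space T^*R^d = R^{2d} inside C^{2d}.\<close>
definition realphase :: "(complex ^ 'n) set" where
  "realphase = {x. \<forall>i. Im (x $ i) = 0}"

definition singular_space :: "'d::finite cmat \<Rightarrow> 'd cvec set" where
  "singular_space F =
     (\<Inter>j\<in>{0..<2 * CARD('d)}. KerM (ReM F ** mpow (ImM F) j)) \<inter> realphase"

end

theory Submission
  imports Defs
begin

text \<open>Write F = R + iI with R = Re F and I = Im F real. For a real vector X with R I^j X = 0
  for all j < k one has (iF)^k X = (-I)^k X and Im((iF)^(k+1)) X = (-1)^k R I^k X. Hence X lies in
  every Ker Im((iF)^k) iff R I^j X = 0 for all j, and the decreasing chain of real subspaces
  {X real. \<forall>j<m. R I^j X = 0} of R^2d is stationary from m = 2d on. Expanding e^(2isF) X in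
  powers of s, Im(e^(2isF)) X vanishes on [0,t] iff all coefficients Im((iF)^k) X do. On S the
  exponential series of e^(2itF) X and e^(-2tI) X agree termwise, and S is invariant under every
  e^(cI), whose inverse e^(-cI) is of the same form.\<close>

section \<open>The matrix exponential\<close>

lemma mscale_of_real: "mscale (complex_of_real r) A = r *\<^sub>R A"
  by (simp add: mscale_def vec_eq_iff scaleR_conv_of_real[where 'a = complex])

lemma mscale_mscale: "mscale a (mscale b A) = mscale (a * b) (A :: 'a::semigroup_mult^'n^'m)"
  by (simp add: mscale_def vec_eq_iff mult.assoc)

lemma mscale_mult_vector: "mscale c A *v x = c *s (A *v x)"
  for A :: "'a::comm_semiring_1^'n^'m"
  by (simp add: mscale_def matrix_vector_mult_def vec_eq_iff sum_distrib_left mult.assoc)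

lemma matrix_vector_mult_smult: "A *v (c *s x) = c *s (A *v x)"
  for A :: "'a::comm_semiring_1^'n^'m"
  by (simp add: matrix_vector_mult_def vec_eq_iff sum_distrib_left mult.left_commute)

lemma mpow_mscale: "mpow (mscale c A) k = mscale (c ^ k) (mpow A k)"
  for A :: "'a::comm_ring_1^'n^'n"
proof (induction k)
  case 0
  show ?case by (simp add: mscale_def mat_def vec_eq_iff)
next
  case (Suc k)
  then show ?case
    by (simp add: mscale_def matrix_matrix_mult_def vec_eq_iff sum_distrib_left algebra_simps)
qed

lemma mpow_add: "mpow A (k + l) = mpow A k ** mpow A l"
  by (induction k) (simp_all add: matrix_mul_assoc)

lemma mpow_Suc_right: "mpow A (Suc k) = mpow A k ** A"
  using mpow_add[of A k 1] by simp

lemma mpow_Suc_mult_vector: "mpow A (Suc k) *v x = mpow A k *v (A *v x)"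
  by (simp add: matrix_vector_mul_assoc mpow_Suc_right del: mpow.simps)

definition entry_norm :: "complex^'n^'n \<Rightarrow> real" where
  "entry_norm M = (\<Sum>i\<in>UNIV. \<Sum>j\<in>UNIV. norm (M $ i $ j))"

lemma norm_mpow_entry_le: "norm (mpow M k $ i $ j) \<le> entry_norm M ^ k"
proof (induction k arbitrary: i j)
  case 0
  show ?case by (simp add: mat_def)
next
  case (Suc k)
  have row: "(\<Sum>l\<in>UNIV. norm (M $ i $ l)) \<le> entry_norm M"
    unfolding entry_norm_def
    by (rule member_le_sum[where f = "\<lambda>i. \<Sum>l\<in>UNIV. norm (M $ i $ l)"]) (auto intro: sum_nonneg)
  have "norm (mpow M (Suc k) $ i $ j) \<le> (\<Sum>l\<in>UNIV. norm (M $ i $ l) * entry_norm M ^ k)"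
    unfolding mpow.simps matrix_matrix_mult_def vec_lambda_beta
    by (rule order_trans[OF norm_sum sum_mono]) (simp add: norm_mult Suc mult_left_mono)
  also have "\<dots> \<le> entry_norm M * entry_norm M ^ k"
    unfolding sum_distrib_right[symmetric]
    by (intro mult_right_mono row) (simp add: entry_norm_def sum_nonneg)
  finally show ?case by simp
qed

lemma norm_vec_le_sum: "norm x \<le> (\<Sum>i\<in>UNIV. norm (x $ i))"
  by (simp add: norm_vec_def L2_set_le_sum)

lemma norm_mpow_le: "norm (mpow M k) \<le> CARD('n) ^ 2 * entry_norm (M :: complex^'n^'n) ^ k"
proof -
  have "norm (mpow M k) \<le> (\<Sum>i\<in>UNIV. \<Sum>j\<in>UNIV. norm (mpow M k $ i $ j))"
    by (rule order_trans[OF norm_vec_le_sum sum_mono[OF norm_vec_le_sum]])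
  also have "\<dots> \<le> (\<Sum>i\<in>(UNIV::'n set). \<Sum>j\<in>(UNIV::'n set). entry_norm M ^ k)"
    by (intro sum_mono norm_mpow_entry_le)
  finally show ?thesis by (simp add: power2_eq_square)
qed

lemma mexp_sums: "(\<lambda>k. (1 / fact k) *\<^sub>R mpow M k) sums mexp M"
  for M :: "complex^'n^'n"
proof -
  have "summable (\<lambda>k. (1 / fact k) *\<^sub>R mpow M k)"
  proof (rule summable_comparison_test')
    show "summable (\<lambda>k. CARD('n) ^ 2 * (entry_norm M ^ k /\<^sub>R fact k))"
      by (intro summable_mult summable_exp_generic)
    show "norm ((1 / fact k) *\<^sub>R mpow M k) \<le> CARD('n) ^ 2 * (entry_norm M ^ k /\<^sub>R fact k)" for k
      using norm_mpow_le[of M k] by (simp add: divide_simps mult.commute)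
  qed
  then show ?thesis
    by (simp add: mexp_def summable_sums flip: mscale_of_real)
qed

lemma bounded_linear_matrix_vector_mult_left: "bounded_linear (\<lambda>A :: complex^'n^'m. A *v x)"
  by (rule linear_conv_bounded_linear[THEN iffD1], rule linearI)
    (simp_all add: matrix_vector_mult_def vec_eq_iff sum.distrib sum_distrib_left distrib_right
      scaleR_conv_of_real[where 'a = complex] mult.assoc)

lemma scaleR_matrix_vector_assoc: "(c *\<^sub>R A) *v x = c *\<^sub>R (A *v x)"
  for A :: "complex^'n^'m"
  using linear_cmul[OF bounded_linear.linear[OF bounded_linear_matrix_vector_mult_left]] .

lemma mexp_mult_vector_sums:
  "(\<lambda>k. (1 / fact k) *\<^sub>R (mpow M k *v x)) sums (mexp M *v x)"
  for M :: "complex^'n^'n"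
  using bounded_linear.sums[OF bounded_linear_matrix_vector_mult_left[of x] mexp_sums[of M]]
  by (simp add: scaleR_matrix_vector_assoc)

lemma mexp_mult_vector_eqI:
  "(\<And>k. mpow M k *v x = mpow N k *v x) \<Longrightarrow> mexp M *v x = mexp N *v x"
  for M N :: "complex^'n^'n"
  using mexp_mult_vector_sums[of M x] by (simp add: sums_unique2[OF _ mexp_mult_vector_sums])

lemma mexp_entry_sums:
  "(\<lambda>k. a ^ k /\<^sub>R fact k * mpow P k $ i $ j) sums (mexp (mscale a P) $ i $ j)"
  for P :: "complex^'n^'n"
proof -
  have "bounded_linear (\<lambda>A :: complex^'n^'n. A $ i $ j)"
    using bounded_linear_compose[OF bounded_linear_vec_nth[of j] bounded_linear_vec_nth[of i]] by simp
  note bounded_linear.sums[OF this mexp_sums[of "mscale a P"]]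
  moreover have "((1 / fact k) *\<^sub>R mpow (mscale a P) k) $ i $ j = a ^ k /\<^sub>R fact k * mpow P k $ i $ j"
    for k
    by (simp only: mpow_mscale) (simp add: mscale_def scaleR_conv_of_real[where 'a = complex] field_simps)
  ultimately show ?thesis by simp
qed

lemma summable_norm_mexp_entry:
  "summable (\<lambda>k. norm (a ^ k /\<^sub>R fact k * mpow P k $ i $ j))"
  for P :: "complex^'n^'n"
proof (rule summable_comparison_test')
  show "summable (\<lambda>k. (norm a * entry_norm P) ^ k /\<^sub>R fact k)"
    by (rule summable_exp_generic)
  show "norm (norm (a ^ k /\<^sub>R fact k * mpow P k $ i $ j)) \<le> (norm a * entry_norm P) ^ k /\<^sub>R fact k"
    for k
    using norm_mpow_entry_le[of P k i j]
    by (simp add: norm_mult norm_power power_mult_distrib divide_right_mono mult_left_mono)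
qed

lemma mexp_mscale_add: "mexp (mscale a P) ** mexp (mscale b P) = mexp (mscale (a + b) P)"
  for P :: "complex^'n^'n"
proof -
  have "(mexp (mscale a P) ** mexp (mscale b P)) $ i $ j = mexp (mscale (a + b) P) $ i $ j" for i j
  proof -
    define \<alpha> where "\<alpha> l k = a ^ k /\<^sub>R fact k * mpow P k $ i $ l" for l k
    define \<beta> where "\<beta> l k = b ^ k /\<^sub>R fact k * mpow P k $ l $ j" for l k
    have "(\<lambda>k. \<Sum>p\<le>k. \<alpha> l p * \<beta> l (k - p)) sums (mexp (mscale a P) $ i $ l * mexp (mscale b P) $ l $ j)"
      for l
      using Cauchy_product_sums[OF summable_norm_mexp_entry summable_norm_mexp_entry]
      unfolding \<alpha>_def \<beta>_def sums_unique[OF mexp_entry_sums, symmetric] .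
    then have "(\<lambda>k. \<Sum>l\<in>UNIV. \<Sum>p\<le>k. \<alpha> l p * \<beta> l (k - p)) sums
        (mexp (mscale a P) ** mexp (mscale b P)) $ i $ j"
      unfolding matrix_matrix_mult_def vec_lambda_beta by (rule sums_sum)
    moreover have "(\<Sum>l\<in>UNIV. \<Sum>p\<le>k. \<alpha> l p * \<beta> l (k - p)) = (a + b) ^ k /\<^sub>R fact k * mpow P k $ i $ j"
      for k
    proof -
      have "(\<Sum>l\<in>UNIV. \<Sum>p\<le>k. \<alpha> l p * \<beta> l (k - p))
          = (\<Sum>p\<le>k. a ^ p /\<^sub>R fact p * (b ^ (k - p) /\<^sub>R fact (k - p)) * (mpow P p ** mpow P (k - p)) $ i $ j)"
        unfolding \<alpha>_def \<beta>_def matrix_matrix_mult_def vec_lambda_beta sum_distrib_left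
        by (subst sum.swap) (simp add: mult_ac)
      also have "\<dots> = (\<Sum>p\<le>k. a ^ p /\<^sub>R fact p * (b ^ (k - p) /\<^sub>R fact (k - p))) * mpow P k $ i $ j"
        by (simp add: sum_distrib_right flip: mpow_add)
      finally show ?thesis
        using exp_series_add_commuting[of a b k] by (simp add: mult.commute)
    qed
    ultimately show ?thesis
      using sums_unique2[OF _ mexp_entry_sums] by simp
  qed
  then show ?thesis by (simp add: vec_eq_iff)
qed

lemma mexp_mscale_0: "mexp (mscale 0 P) = mat 1"
  for P :: "complex^'n^'n"
proof -
  have "(\<lambda>k. (1 / fact k) *\<^sub>R mpow (mscale 0 P) k) = (\<lambda>k. if k = 0 then mat 1 else 0)"
    by (simp only: mpow_mscale) (auto simp: mscale_def vec_eq_iff)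
  with mexp_sums[of "mscale 0 P"] show ?thesis
    using sums_unique2 sums_single[of 0 "\<lambda>_. mat 1 :: complex^'n^'n"] by fastforce
qed

lemma mexp_mscale_inverse: "mexp (mscale a P) *v (mexp (mscale (- a) P) *v x) = x"
  for P :: "complex^'n^'n"
  by (simp add: matrix_vector_mul_assoc mexp_mscale_add mexp_mscale_0)

section \<open>Real vectors and real matrices\<close>

definition Im_vec :: "complex^'n \<Rightarrow> complex^'n" where
  "Im_vec v = (\<chi> i. complex_of_real (Im (v $ i)))"

lemma bounded_linear_Im_vec: "bounded_linear Im_vec"
  by (rule linear_conv_bounded_linear[THEN iffD1], rule linearI)
    (simp_all add: Im_vec_def vec_eq_iff scaleR_conv_of_real[where 'a = complex])

lemma realphase_iff_Im_vec_eq_0: "x \<in> realphase \<longleftrightarrow> Im_vec x = 0"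
  by (simp add: realphase_def Im_vec_def vec_eq_iff)

lemma ImM_mult_vector: "x \<in> realphase \<Longrightarrow> ImM M *v x = Im_vec (M *v x)"
  by (auto simp: realphase_def ImM_def Im_vec_def matrix_vector_mult_def vec_eq_iff Im_sum
      intro!: sum.cong simp: complex_eq_iff)

lemma Im_vec_i_smult_diff: "w \<in> realphase \<Longrightarrow> u \<in> realphase \<Longrightarrow> Im_vec (\<i> *s w - u) = w"
  by (simp add: Im_vec_def realphase_def vec_eq_iff complex_eq_iff)

lemma dim_realphase_le: "dim (realphase :: (complex^'n) set) \<le> CARD('n)"
proof -
  let ?emb = "\<lambda>v :: real^'n. \<chi> i. complex_of_real (v $ i)"
  have "realphase = range ?emb"
    by (auto simp: realphase_def vec_eq_iff complex_eq_iff intro!: image_eqI[where x = "\<chi> i. Re (_ $ i)"])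
  moreover have "linear ?emb"
    by (rule linearI) (simp_all add: vec_eq_iff scaleR_conv_of_real[where 'a = complex])
  then have "dim (range ?emb) \<le> dim (UNIV :: (real^'n) set)"
    by (rule dim_image_le)
  ultimately show ?thesis by simp
qed

definition real_matrix :: "complex^'n^'m \<Rightarrow> bool" where
  "real_matrix M \<longleftrightarrow> (\<forall>i j. Im (M $ i $ j) = 0)"

lemma real_matrix_ReM: "real_matrix (ReM M)"
  and real_matrix_ImM: "real_matrix (ImM M)"
  by (simp_all add: real_matrix_def ReM_def ImM_def)

lemma real_matrix_mult: "real_matrix A \<Longrightarrow> real_matrix B \<Longrightarrow> real_matrix (A ** B)"
  by (simp add: real_matrix_def matrix_matrix_mult_def Im_sum)

lemma real_matrix_mpow: "real_matrix A \<Longrightarrow> real_matrix (mpow A k)"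
  by (induction k) (simp_all add: real_matrix_mult, simp add: real_matrix_def mat_def)

lemma real_matrix_mscale_of_real: "real_matrix A \<Longrightarrow> real_matrix (mscale (complex_of_real c) A)"
  by (simp add: real_matrix_def mscale_def)

lemma real_matrix_mult_vector: "real_matrix M \<Longrightarrow> x \<in> realphase \<Longrightarrow> M *v x \<in> realphase"
  by (simp add: real_matrix_def realphase_def matrix_vector_mult_def Im_sum)

lemma mexp_mult_vector_realphase:
  assumes "real_matrix M" and "x \<in> realphase"
  shows "mexp M *v x \<in> realphase"
proof -
  have "(\<lambda>k. Im_vec ((1 / fact k) *\<^sub>R (mpow M k *v x))) sums Im_vec (mexp M *v x)"
    by (rule bounded_linear.sums[OF bounded_linear_Im_vec mexp_mult_vector_sums])
  moreover have "Im_vec ((1 / fact k) *\<^sub>R (mpow M k *v x)) = 0" for k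
    using real_matrix_mult_vector[OF real_matrix_mpow[OF assms(1)] assms(2)]
    by (simp add: realphase_iff_Im_vec_eq_0 linear_cmul[OF bounded_linear.linear[OF bounded_linear_Im_vec]])
  ultimately show ?thesis
    using sums_unique2[OF _ sums_zero] by (simp add: realphase_iff_Im_vec_eq_0)
qed

section \<open>Kernels of \<open>Re F (Im F)\<^sup>j\<close>\<close>

lemma decseq_subspaces_stabilise:
  fixes K :: "nat \<Rightarrow> 'a::euclidean_space set"
  assumes sub: "\<And>m. subspace (K m)" and dec: "decseq K"
    and step: "\<And>m. K (Suc m) = K m \<Longrightarrow> K (Suc (Suc m)) = K (Suc m)"
    and dim: "dim (K 0) \<le> N"
  shows "K N \<subseteq> K m"
proof -
  have "\<exists>m\<le>N. K (Suc m) = K m"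
  proof (rule ccontr)
    assume "\<not> ?thesis"
    then have "dim (K (Suc m)) < dim (K m)" if "m \<le> N" for m
      using that decseq_SucD[OF dec, of m] dim_psubset[of "K (Suc m)" "K m"]
      by (auto simp: span_eq_iff[THEN iffD2, OF sub])
    then have "dim (K m) + m \<le> dim (K 0)" if "m \<le> Suc N" for m
      using that by (induction m) fastforce+
    from this[of "Suc N"] dim show False by simp
  qed
  then obtain m0 where "m0 \<le> N" and m0: "K (Suc m0) = K m0" by blast
  have "K (Suc (m0 + j)) = K (m0 + j)" for j
    by (induction j) (simp_all add: m0 step)
  then have stable: "K (m0 + j) = K m0" for j
    by (induction j) simp_all
  show ?thesis
  proof (cases "m \<le> N")
    case True
    then show ?thesis using dec by (simp add: decseq_def)
  next
    case False
    then show ?thesis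
      using stable[of "N - m0"] stable[of "m - m0"] \<open>m0 \<le> N\<close> by simp
  qed
qed

definition krylov_kernel :: "complex^'n^'n \<Rightarrow> complex^'n^'n \<Rightarrow> nat \<Rightarrow> (complex^'n) set" where
  "krylov_kernel A B m = {x \<in> realphase. \<forall>j<m. A *v (mpow B j *v x) = 0}"

lemma subspace_krylov_kernel: "subspace (krylov_kernel A B m)"
  by (auto simp: subspace_def krylov_kernel_def realphase_def matrix_vector_right_distrib
      linear_cmul[OF matrix_vector_mul_linear])

lemma decseq_krylov_kernel: "decseq (krylov_kernel A B)"
  by (auto simp: decseq_def krylov_kernel_def)

lemma krylov_kernel_Suc:
  assumes "real_matrix B"
  shows "x \<in> krylov_kernel A B (Suc m) \<longleftrightarrow> x \<in> krylov_kernel A B 1 \<and> B *v x \<in> krylov_kernel A B m"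
proof -
  have "(\<forall>j<Suc m. P j) \<longleftrightarrow> P 0 \<and> (\<forall>j<m. P (Suc j))" for P :: "nat \<Rightarrow> bool"
    using less_Suc_eq_0_disj by auto
  then show ?thesis
    using real_matrix_mult_vector[OF assms]
    by (auto simp: krylov_kernel_def mpow_Suc_mult_vector simp del: mpow.simps)
qed

lemma krylov_kernel_annihilates:
  assumes "real_matrix B" and "x \<in> krylov_kernel A B CARD('n)"
  shows "A *v (mpow B j *v x) = (0 :: complex^'n)"
proof -
  have "krylov_kernel A B CARD('n) \<subseteq> krylov_kernel A B (Suc j)"
  proof (rule decseq_subspaces_stabilise[OF subspace_krylov_kernel decseq_krylov_kernel])
    show "krylov_kernel A B (Suc (Suc m)) = krylov_kernel A B (Suc m)"
      if "krylov_kernel A B (Suc m) = krylov_kernel A B m" for m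
      using that krylov_kernel_Suc[OF assms(1)] by blast
    show "dim (krylov_kernel A B 0) \<le> CARD('n)"
      using dim_realphase_le by (simp add: krylov_kernel_def)
  qed
  with assms(2) show ?thesis by (auto simp: krylov_kernel_def)
qed

lemma i_mscale_mult_vector: "mscale \<i> F *v v = \<i> *s (ReM F *v v) - ImM F *v v"
proof -
  have "\<i> * z * w = \<i> * (complex_of_real (Re z) * w) - complex_of_real (Im z) * w" for z w
    by (subst complex_eq[of z]) (simp add: algebra_simps)
  then show ?thesis
    by (simp add: mscale_def ReM_def ImM_def matrix_vector_mult_def vec_eq_iff
        sum_distrib_left sum_subtractf)
qed

lemma mpow_i_mscale_mult_vector:
  assumes "\<forall>j<k. ReM F *v (mpow (ImM F) j *v x) = 0"
  shows "mpow (mscale \<i> F) k *v x = mpow (mscale (-1) (ImM F)) k *v x"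
  using assms
proof (induction k)
  case 0
  show ?case by simp
next
  case (Suc k)
  let ?y = "mpow (mscale (-1) (ImM F)) k *v x"
  have "ReM F *v ?y = 0"
    using Suc.prems by (simp add: mpow_mscale mscale_mult_vector matrix_vector_mult_smult)
  then have "mpow (mscale \<i> F) (Suc k) *v x = - (ImM F *v ?y)"
    using Suc by (simp add: matrix_vector_mul_assoc[symmetric] i_mscale_mult_vector)
  also have "\<dots> = mpow (mscale (-1) (ImM F)) (Suc k) *v x"
    by (simp only: mpow.simps matrix_vector_mul_assoc[symmetric] mscale_mult_vector)
      (simp add: vec_eq_iff)
  finally show ?case .
qed

lemma ImM_mpow_i_mscale_Suc_mult_vector:
  assumes "x \<in> realphase" and "\<forall>j<k. ReM F *v (mpow (ImM F) j *v x) = 0"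
  shows "ImM (mpow (mscale \<i> F) (Suc k)) *v x = (-1) ^ k *s (ReM F *v (mpow (ImM F) k *v x))"
proof -
  let ?y = "mpow (mscale (-1) (ImM F)) k *v x"
  have "?y \<in> realphase"
    using assms(1) real_matrix_ImM
    by (intro real_matrix_mult_vector real_matrix_mpow real_matrix_mscale_of_real[of _ "-1", simplified])
  have "mpow (mscale \<i> F) (Suc k) *v x = \<i> *s (ReM F *v ?y) - ImM F *v ?y"
    by (simp only: mpow.simps matrix_vector_mul_assoc[symmetric] i_mscale_mult_vector
        mpow_i_mscale_mult_vector[OF assms(2)])
  with \<open>?y \<in> realphase\<close> have "ImM (mpow (mscale \<i> F) (Suc k)) *v x = ReM F *v ?y"
    by (simp add: ImM_mult_vector[OF assms(1)] Im_vec_i_smult_diff real_matrix_mult_vector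
        real_matrix_ReM real_matrix_ImM)
  also have "\<dots> = (-1) ^ k *s (ReM F *v (mpow (ImM F) k *v x))"
    by (simp add: mpow_mscale mscale_mult_vector matrix_vector_mult_smult)
  finally show ?thesis .
qed

lemma krylov_kernel_iff_ImM_mpow:
  fixes F :: "complex^'n^'n"
  assumes "x \<in> realphase"
  shows "x \<in> krylov_kernel (ReM F) (ImM F) CARD('n) \<longleftrightarrow>
    (\<forall>k\<ge>1. ImM (mpow (mscale \<i> F) k) *v x = 0)"
proof
  assume "x \<in> krylov_kernel (ReM F) (ImM F) CARD('n)"
  then have "ReM F *v (mpow (ImM F) j *v x) = 0" for j
    by (rule krylov_kernel_annihilates[OF real_matrix_ImM])
  then show "\<forall>k\<ge>1. ImM (mpow (mscale \<i> F) k) *v x = 0"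
    using ImM_mpow_i_mscale_Suc_mult_vector[OF assms] by (metis Suc_le_D One_nat_def vector_smult_rzero)
next
  assume vanish: "\<forall>k\<ge>1. ImM (mpow (mscale \<i> F) k) *v x = 0"
  have "\<forall>j<m. ReM F *v (mpow (ImM F) j *v x) = 0" for m
  proof (induction m)
    case (Suc m)
    then have "(-1) ^ m *s (ReM F *v (mpow (ImM F) m *v x)) = 0"
      using vanish ImM_mpow_i_mscale_Suc_mult_vector[OF assms] by (metis le_add1 plus_1_eq_Suc)
    then have "ReM F *v (mpow (ImM F) m *v x) = 0"
      by (simp add: vec_eq_iff)
    with Suc show ?case
      using less_Suc_eq by auto
  qed simp
  with assms show "x \<in> krylov_kernel (ReM F) (ImM F) CARD('n)"
    by (simp add: krylov_kernel_def)
qed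

lemma krylov_kernel_eq_ImM_mpow:
  fixes F :: "complex^'n^'n"
  shows "krylov_kernel (ReM F) (ImM F) CARD('n) =
    (\<Inter>k\<in>{1..}. KerM (ImM (mpow (mscale \<i> F) k))) \<inter> realphase"
proof -
  have "x \<in> realphase" if "x \<in> krylov_kernel (ReM F) (ImM F) CARD('n)" for x
    using that by (simp add: krylov_kernel_def)
  then show ?thesis
    using krylov_kernel_iff_ImM_mpow by (auto simp: KerM_def)
qed

section \<open>The singular space\<close>

lemma powser_coeffs_eq_0:
  fixes c :: "nat \<Rightarrow> 'a::{real_normed_field,banach}"
  assumes "t > 0" and vanish: "\<And>s. s \<in> {0<..t} \<Longrightarrow> (\<lambda>k. c k * of_real s ^ k) sums 0"
  shows "c k = 0"
proof (induction k rule: less_induct)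
  case (less k)
  \<comment> \<open>As the lower coefficients vanish, \<open>g\<close> is zero on \<open>(0,t]\<close>; continuity at 0 gives \<open>c k = g 0 = 0\<close>.\<close>
  define g where "g z = (\<Sum>n. c (n + k) * z ^ n)" for z
  have g_vanish: "summable (\<lambda>n. c (n + k) * of_real s ^ n) \<and> g (of_real s) = 0"
    if s: "s \<in> {0<..t}" for s
  proof -
    let ?z = "of_real s :: 'a"
    have "?z \<noteq> 0" using s by simp
    have sm: "summable (\<lambda>n. c n * ?z ^ n)"
      using vanish[OF s] by (rule sums_summable)
    have "summable (\<lambda>n. inverse (?z ^ k) * (c (n + k) * ?z ^ (n + k)))"
      using summable_ignore_initial_segment[OF sm, of k] by (rule summable_mult)
    then have sm_k: "summable (\<lambda>n. c (n + k) * ?z ^ n)"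
      using \<open>?z \<noteq> 0\<close> by (simp add: power_add field_simps)
    have "?z ^ k * g ?z = (\<Sum>n. c (n + k) * ?z ^ (n + k))"
      unfolding g_def using suminf_mult[OF sm_k, of "?z ^ k"] by (simp add: power_add mult_ac)
    also have "\<dots> = (\<Sum>n. c n * ?z ^ n)"
      using suminf_split_initial_segment[OF sm, of k] less by simp
    also have "\<dots> = 0"
      using vanish[OF s] by (rule sums_unique[symmetric])
    finally show ?thesis
      using sm_k \<open>?z \<noteq> 0\<close> by simp
  qed
  have "isCont g 0"
    unfolding g_def using g_vanish[of t] \<open>t > 0\<close>
    by (intro isCont_powser[where K = "of_real t"]) auto
  moreover have "(\<lambda>n. t * inverse (real (Suc n))) \<longlonglongrightarrow> t * 0"
    by (intro tendsto_mult tendsto_const LIMSEQ_inverse_real_of_nat)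
  then have "(\<lambda>n. of_real (t / Suc n) :: 'a) \<longlonglongrightarrow> of_real 0"
    unfolding divide_inverse by (intro tendsto_of_real) simp
  ultimately have "(\<lambda>n. g (of_real (t / Suc n))) \<longlonglongrightarrow> g 0"
    by (auto intro: isCont_tendsto_compose)
  moreover have "g (of_real (t / Suc n)) = 0" for n
    using g_vanish[of "t / Suc n"] \<open>t > 0\<close> by (simp add: field_simps del: of_real_divide)
  ultimately have "g 0 = 0"
    using LIMSEQ_unique[OF _ tendsto_const] by simp
  then show ?case
    using powser_zero[of "\<lambda>n. c (n + k)"] by (simp add: g_def)
qed

lemma ImM_mexp_mult_vector_sums:
  fixes F :: "complex^'n^'n"
  assumes "x \<in> realphase"
  shows "(\<lambda>k. ((2 * s) ^ k / fact k) *\<^sub>R (ImM (mpow (mscale \<i> F) k) *v x))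
    sums (ImM (mexp (mscale (2 * \<i> * complex_of_real s) F)) *v x)"
proof -
  let ?M = "mscale (2 * \<i> * complex_of_real s) F"
  have "?M = mscale (complex_of_real (2 * s)) (mscale \<i> F)"
    by (simp add: mscale_mscale mult_ac)
  then have "mpow ?M k = (2 * s) ^ k *\<^sub>R mpow (mscale \<i> F) k" for k
    by (simp only: mpow_mscale flip: of_real_power mscale_of_real)
  then have "Im_vec ((1 / fact k) *\<^sub>R (mpow ?M k *v x))
      = ((2 * s) ^ k / fact k) *\<^sub>R Im_vec (mpow (mscale \<i> F) k *v x)" for k
    using linear_cmul[OF bounded_linear.linear[OF bounded_linear_Im_vec]]
    by (simp only: scaleR_matrix_vector_assoc) simp
  with bounded_linear.sums[OF bounded_linear_Im_vec mexp_mult_vector_sums[of ?M x]]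
  show ?thesis
    by (simp add: ImM_mult_vector[OF assms])
qed

lemma krylov_kernel_eq_ImM_mexp:
  fixes F :: "complex^'n^'n"
  assumes "t > 0"
  shows "krylov_kernel (ReM F) (ImM F) CARD('n) =
    (\<Inter>s\<in>{0..t}. KerM (ImM (mexp (mscale (2 * \<i> * complex_of_real s) F)))) \<inter> realphase"
proof (intro set_eqI iffI)
  fix x assume x: "x \<in> krylov_kernel (ReM F) (ImM F) CARD('n)"
  then have "x \<in> realphase" by (simp add: krylov_kernel_def)
  have "ImM (mpow (mscale \<i> F) k) *v x = 0" for k
    using krylov_kernel_iff_ImM_mpow[OF \<open>x \<in> realphase\<close>, of F] x \<open>x \<in> realphase\<close>
    by (cases "k = 0") (simp_all add: ImM_mult_vector realphase_iff_Im_vec_eq_0)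
  then have "ImM (mexp (mscale (2 * \<i> * complex_of_real s) F)) *v x = 0" for s
    using ImM_mexp_mult_vector_sums[OF \<open>x \<in> realphase\<close>, of s F] sums_unique2[OF _ sums_zero] by simp
  with \<open>x \<in> realphase\<close>
  show "x \<in> (\<Inter>s\<in>{0..t}. KerM (ImM (mexp (mscale (2 * \<i> * complex_of_real s) F)))) \<inter> realphase"
    by (simp add: KerM_def)
next
  fix x assume x: "x \<in> (\<Inter>s\<in>{0..t}. KerM (ImM (mexp (mscale (2 * \<i> * complex_of_real s) F)))) \<inter> realphase"
  then have "x \<in> realphase" by simp
  have "(ImM (mpow (mscale \<i> F) k) *v x) $ i = 0" for k i
  proof -
    have "(2 ^ k / fact k) * (ImM (mpow (mscale \<i> F) k) *v x) $ i = 0"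
    proof (rule powser_coeffs_eq_0[OF assms])
      fix s :: real assume s: "s \<in> {0<..t}"
      have "ImM (mexp (mscale (2 * \<i> * complex_of_real s) F)) *v x = 0"
        using x s by (auto simp: KerM_def)
      with bounded_linear.sums[OF bounded_linear_vec_nth ImM_mexp_mult_vector_sums[OF \<open>x \<in> realphase\<close>, of s F]]
      show "(\<lambda>k. (2 ^ k / fact k) * (ImM (mpow (mscale \<i> F) k) *v x) $ i * complex_of_real s ^ k) sums 0"
        by (simp add: scaleR_conv_of_real[where 'a = complex] power_mult_distrib mult_ac)
    qed
    then show ?thesis by simp
  qed
  then show "x \<in> krylov_kernel (ReM F) (ImM F) CARD('n)"
    using krylov_kernel_iff_ImM_mpow[OF \<open>x \<in> realphase\<close>] by (simp add: vec_eq_iff)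
qed

lemma mexp_mult_vector_krylov_kernel:
  fixes F :: "complex^'n^'n"
  assumes "x \<in> krylov_kernel (ReM F) (ImM F) CARD('n)"
  shows "mexp (mscale (2 * \<i> * complex_of_real t) F) *v x
    = mexp (mscale (complex_of_real (-2 * t)) (ImM F)) *v x"
proof (rule mexp_mult_vector_eqI)
  fix k
  have "mscale (2 * \<i> * complex_of_real t) F = mscale (complex_of_real (2 * t)) (mscale \<i> F)"
    by (simp add: mscale_mscale mult_ac)
  then have "mpow (mscale (2 * \<i> * complex_of_real t) F) k *v x
      = complex_of_real (2 * t) ^ k *s (mpow (mscale \<i> F) k *v x)"
    by (simp only: mpow_mscale mscale_mult_vector)
  also have "mpow (mscale \<i> F) k *v x = mpow (mscale (-1) (ImM F)) k *v x"
    by (rule mpow_i_mscale_mult_vector) (simp add: krylov_kernel_annihilates[OF real_matrix_ImM assms])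
  also have "\<dots> = (-1) ^ k *s (mpow (ImM F) k *v x)"
    by (simp only: mpow_mscale mscale_mult_vector)
  also have "complex_of_real (2 * t) ^ k *s ((-1) ^ k *s (mpow (ImM F) k *v x))
      = complex_of_real (-2 * t) ^ k *s (mpow (ImM F) k *v x)"
  proof -
    have "complex_of_real (-2 * t) = complex_of_real (2 * t) * (-1)" by simp
    then show ?thesis by (simp only: vector_smult_assoc power_mult_distrib)
  qed
  also have "\<dots> = mpow (mscale (complex_of_real (-2 * t)) (ImM F)) k *v x"
    by (simp only: mpow_mscale mscale_mult_vector)
  finally show "mpow (mscale (2 * \<i> * complex_of_real t) F) k *v x
      = mpow (mscale (complex_of_real (-2 * t)) (ImM F)) k *v x" .
qed

lemma mexp_ImM_mult_vector_krylov_kernel: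
  fixes F :: "complex^'n^'n"
  assumes x: "x \<in> krylov_kernel (ReM F) (ImM F) CARD('n)"
  shows "mexp (mscale (complex_of_real c) (ImM F)) *v x \<in> krylov_kernel (ReM F) (ImM F) CARD('n)"
proof -
  let ?N = "mscale (complex_of_real c) (ImM F)"
  have "x \<in> realphase" using x by (simp add: krylov_kernel_def)
  have "(ReM F ** mpow (ImM F) j) *v (mexp ?N *v x) = 0" for j
  proof -
    have "(\<lambda>k. (ReM F ** mpow (ImM F) j) *v ((1 / fact k) *\<^sub>R (mpow ?N k *v x)))
        sums ((ReM F ** mpow (ImM F) j) *v (mexp ?N *v x))"
      by (rule bounded_linear.sums[OF matrix_vector_mul_bounded_linear mexp_mult_vector_sums])
    moreover have "(ReM F ** mpow (ImM F) j) *v ((1 / fact k) *\<^sub>R (mpow ?N k *v x)) = 0" for k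
      using krylov_kernel_annihilates[OF real_matrix_ImM x, of "j + k"]
      by (simp add: linear_cmul[OF matrix_vector_mul_linear] mpow_mscale mscale_mult_vector
          matrix_vector_mult_smult matrix_vector_mul_assoc mpow_add matrix_mul_assoc del: mpow.simps)
    ultimately show ?thesis
      using sums_unique2[OF _ sums_zero] by simp
  qed
  moreover have "mexp ?N *v x \<in> realphase"
    by (intro mexp_mult_vector_realphase real_matrix_mscale_of_real real_matrix_ImM \<open>x \<in> realphase\<close>)
  ultimately show ?thesis
    by (simp add: krylov_kernel_def matrix_vector_mul_assoc)
qed

lemma mexp_ImM_image_krylov_kernel:
  fixes F :: "complex^'n^'n"
  shows "(\<lambda>x. mexp (mscale (complex_of_real c) (ImM F)) *v x) ` krylov_kernel (ReM F) (ImM F) CARD('n)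
    = krylov_kernel (ReM F) (ImM F) CARD('n)"
proof (intro subset_antisym subsetI)
  fix y assume y: "y \<in> krylov_kernel (ReM F) (ImM F) CARD('n)"
  let ?x = "mexp (mscale (complex_of_real (- c)) (ImM F)) *v y"
  have "y = mexp (mscale (complex_of_real c) (ImM F)) *v ?x"
    using mexp_mscale_inverse[of "complex_of_real c" "ImM F" y] by simp
  moreover have "?x \<in> krylov_kernel (ReM F) (ImM F) CARD('n)"
    using mexp_ImM_mult_vector_krylov_kernel[OF y] .
  ultimately show "y \<in> (\<lambda>x. mexp (mscale (complex_of_real c) (ImM F)) *v x) ` krylov_kernel (ReM F) (ImM F) CARD('n)"
    by blast
qed (auto intro: mexp_ImM_mult_vector_krylov_kernel)

lemma singular_space_eq_krylov_kernel:
  "singular_space F = krylov_kernel (ReM F) (ImM F) CARD('d + 'd)"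
  for F :: "'d::finite cmat"
  by (auto simp: singular_space_def krylov_kernel_def KerM_def card_UNIV_sum matrix_vector_mul_assoc)

theorem mainTheorem9:
  fixes Q :: "'d::finite cmat" and F :: "'d cmat"
  assumes "transpose Q = Q"
    and "F = Jmat ** Q"
  shows "(\<forall>t::real. t > 0 \<longrightarrow>
            singular_space F =
              (\<Inter>s\<in>{0..t}. KerM (ImM (mexp (mscale (2 * \<i> * complex_of_real s) F)))) \<inter> realphase
          \<and> singular_space F =
              (\<Inter>k\<in>{1..}. KerM (ImM (mpow (mscale \<i> F) k))) \<inter> realphase)
       \<and> (\<forall>X\<in>singular_space F. \<forall>t::real.
            mexp (mscale (2 * \<i> * complex_of_real t) F) *v X
              = mexp (mscale (complex_of_real (-2 * t)) (ImM F)) *v X)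
       \<and> (\<forall>t::real. (\<lambda>X. mexp (mscale (complex_of_real (2 * t)) (ImM F)) *v X) ` singular_space F
              = singular_space F)"
  unfolding singular_space_eq_krylov_kernel
proof (intro conjI allI impI ballI)
  fix t :: real
  assume "t > 0"
  then show "krylov_kernel (ReM F) (ImM F) CARD('d + 'd) =
      (\<Inter>s\<in>{0..t}. KerM (ImM (mexp (mscale (2 * \<i> * complex_of_real s) F)))) \<inter> realphase"
    by (rule krylov_kernel_eq_ImM_mexp)
qed (rule krylov_kernel_eq_ImM_mpow mexp_ImM_image_krylov_kernel mexp_mult_vector_krylov_kernel,
    assumption?)+

end
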